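(* Let $p$ be a prime and $q$ a power of $p$. Let $s,b$ be integers with $1\le s\le b<q$, let $L=\{b-s+1,b-s+2,\ldots,b\}$, and assume $p\nmid\binom{b}{s}$. If $\mathcal{F}\subseteq 2^{[n]}$ is $q$-modular $L$-differencing Sperner, then $$|\mathcal{F}|\le\sum_{i=0}^{s}\binom{n-1}{i}.$$
   Context: $[n]=\{1,\ldots,n\}$ and $2^{[n]}$ is the family of all subsets of $[n]$. For a positive integer $m$ and $L\subseteq\mathbb{Z}$, write $r\in L\pmod m$ if $r\equiv \ell\pmod m$ for some $\ell\in L$. For $L\subseteq[q-1]$, a family $\mathcal{F}\subseteq 2^{[n]}$ is $q$-modular $L$-differencing Sperner if $|A\setminus B|\in L\pmod q$ for all distinct $A,B\in\mathcal{F}$. *)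

theory Defs
  imports "HOL-Computational_Algebra.Primes"
begin

definition mod_in :: "nat \<Rightarrow> nat set \<Rightarrow> nat \<Rightarrow> bool" where
  "mod_in m L r \<longleftrightarrow> (\<exists>l\<in>L. r mod m = l mod m)"

definition modular_L_differencing_Sperner ::
  "nat \<Rightarrow> nat set \<Rightarrow> nat \<Rightarrow> nat set set \<Rightarrow> bool" where
  "modular_L_differencing_Sperner q L n F \<longleftrightarrow>
     F \<subseteq> Pow {1..n} \<and>
     (\<forall>A\<in>F. \<forall>B\<in>F. A \<noteq> B \<longrightarrow> mod_in q L (card (A - B)))"

end

theory Submission
  imports Defs "Jordan_Normal_Form.Determinant"
begin

text \<open>
  Polynomial method. For \<open>s < q = p ^ k\<close> one has \<open>(t choose s) \<equiv> (t mod q choose s) (mod p)\<close>, so \<open>p\<close> divides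
  \<open>t choose s\<close> whenever \<open>t mod q < s\<close>. To \<open>A\<close> in the family associate
  \<open>f\<^sub>A(x) = (\<langle>x, 1\<^sub>X\<rangle> + c choose s)\<close>, where \<open>X = A\<close> if \<open>n \<notin> A\<close> and \<open>X = {1..n} - A\<close>
  otherwise (so \<open>X \<subseteq> {1..<n}\<close>), with the shift \<open>c\<close> chosen so that the argument of
  \<open>f\<^sub>A(1\<^sub>B)\<close> is congruent mod \<open>q\<close> to \<open>b - card (A - B)\<close>, resp. \<open>card (B - A) + s - 1 - b\<close>.
  For \<open>B \<noteq> A\<close> both residues lie in \<open>{0..<s}\<close> because \<open>L = {b - s + 1..b}\<close>, so \<open>p\<close> divides
  \<open>f\<^sub>A(1\<^sub>B)\<close>; while \<open>f\<^sub>A(1\<^sub>A)\<close> is congruent to \<open>b choose s\<close>, resp. equal to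
  \<open>q + s - 1 - b choose s\<close>, both prime to \<open>p\<close>. On 0/1-vectors every \<open>f\<^sub>A\<close> is a combination of
  the monomials \<open>x\<^sub>T\<close>, \<open>T \<subseteq> {1..<n}\<close>, \<open>card T \<le> s\<close>, so the integer matrix \<open>(f\<^sub>A(1\<^sub>B))\<close> factors
  through that many dimensions, while modulo \<open>p\<close> it is diagonal with unit diagonal entries,
  hence has nonzero determinant.
\<close>

lemma choose_mult_fact_eq_prod_diff:
  "(m choose s) * fact s = (\<Prod>i<s. m - i)"
proof (induction s arbitrary: m)
  case 0
  then show ?case by simp
next
  case (Suc s)
  have "(m choose Suc s) * fact (Suc s) = Suc s * (m choose Suc s) * fact s"
    by (simp add: algebra_simps)
  also have "\<dots> = m * ((m - 1) choose s) * fact s"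
    using times_binomial_minus1_eq[of "Suc s" m] by simp
  also have "\<dots> = m * (\<Prod>i<s. m - Suc i)"
    using Suc.IH[of "m - 1"] by (simp add: mult.assoc)
  also have "\<dots> = (\<Prod>i<Suc s. m - i)"
    unfolding prod.lessThan_Suc_shift by simp
  finally show ?case .
qed

lemma prime_dvd_choose_prime_power:
  assumes p: "prime p" and j: "0 < j" "j < p ^ k"
  shows "p dvd (p ^ k choose j)"
proof (rule ccontr)
  assume "\<not> p dvd (p ^ k choose j)"
  then have "coprime (p ^ k) (p ^ k choose j)"
    using p by (simp add: prime_imp_coprime)
  moreover have "p ^ k dvd j * (p ^ k choose j)"
    using times_binomial_minus1_eq[OF j(1), of "p ^ k"] by simp
  ultimately have "p ^ k dvd j"
    by (simp add: coprime_dvd_mult_left_iff)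
  then show False
    using j by (simp add: nat_dvd_not_less)
qed

lemma choose_prime_power_add_mod:
  assumes p: "prime p" and s: "s < p ^ k"
  shows "(p ^ k + r choose s) mod p = (r choose s) mod p"
proof -
  let ?q = "p ^ k"
  have "?q + r choose s = (\<Sum>j\<le>s. (?q choose j) * (r choose (s - j)))"
    by (rule vandermonde[symmetric])
  also have "\<dots> = (r choose s) + (\<Sum>j\<in>{1..s}. (?q choose j) * (r choose (s - j)))"
    by (simp add: atMost_atLeast0 sum.atLeast_Suc_atMost)
  finally have split:
    "?q + r choose s = (r choose s) + (\<Sum>j\<in>{1..s}. (?q choose j) * (r choose (s - j)))" .
  have "p dvd (\<Sum>j\<in>{1..s}. (?q choose j) * (r choose (s - j)))"
    using prime_dvd_choose_prime_power[OF p] s by (intro dvd_sum) auto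
  then show ?thesis
    unfolding split by (simp add: mod_add_right_eq[symmetric])
qed

lemma choose_prime_power_mult_add_mod:
  assumes "prime p" and "s < p ^ k"
  shows "(p ^ k * m + r choose s) mod p = (r choose s) mod p"
proof (induction m)
  case (Suc m)
  then show ?case
    using choose_prime_power_add_mod[OF assms, of "p ^ k * m + r"] by (simp add: add.assoc)
qed simp

lemma choose_mod_prime_power:
  assumes "prime p" and "s < p ^ k"
  shows "(t choose s) mod p = (t mod p ^ k choose s) mod p"
  using choose_prime_power_mult_add_mod[OF assms, of "t div p ^ k" "t mod p ^ k"] by simp

lemma prime_dvd_choose_if_mod_less:
  assumes "prime p" and "s < p ^ k" and "t mod p ^ k < s"
  shows "p dvd (t choose s)"
  using choose_mod_prime_power[OF assms(1,2), of t] assms(3)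
  by (simp add: dvd_eq_mod_eq_0 binomial_eq_0)

lemma multiplicity_prime_power_diff:
  fixes p :: nat
  assumes p: "prime p" and x: "0 < x" "x < p ^ k"
  shows "multiplicity p (p ^ k - x) = multiplicity p x"
proof (rule multiplicity_cong)
  have dvd_pk: "p ^ r dvd p ^ k" if "p ^ r dvd y" "0 < y" "y < p ^ k" for r y
  proof -
    have "p ^ r < p ^ k"
      using that dvd_imp_le by (meson le_less_trans)
    then have "r < k"
      using prime_gt_1_nat[OF p] power_less_imp_less_exp by blast
    then show ?thesis
      by (simp add: le_imp_power_dvd)
  qed
  fix r
  show "p ^ r dvd p ^ k - x \<longleftrightarrow> p ^ r dvd x"
  proof
    assume "p ^ r dvd p ^ k - x"
    with dvd_pk[of r "p ^ k - x"] x show "p ^ r dvd x"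
      by (metis diff_diff_cancel dvd_diff_nat less_imp_le zero_less_diff)
  next
    assume "p ^ r dvd x"
    with dvd_pk[of r x] x show "p ^ r dvd p ^ k - x"
      by simp
  qed
qed

text \<open>Both sides times \<open>s!\<close> are products of \<open>s\<close> numbers below \<open>p ^ k\<close>, the factors
  on the left being \<open>p ^ k - j\<close> for the factors \<open>j\<close> on the right; these have equal \<open>p\<close>-adic valuation.\<close>

lemma prime_not_dvd_choose_reflect:
  fixes p :: nat
  assumes p: "prime p" and sb: "s \<le> b" and bq: "b < p ^ k"
    and nd: "\<not> p dvd (b choose s)"
  shows "\<not> p dvd (p ^ k + s - 1 - b choose s)"
proof -
  let ?q = "p ^ k" and ?c = "p ^ k + s - 1 - b"
  have pe: "prime_elem p" and nu: "\<not> is_unit p"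
    using p by (auto simp: prime_imp_prime_elem)
  have "(?c choose s) * fact s = (\<Prod>i<s. ?c - (s - Suc i))"
    unfolding choose_mult_fact_eq_prod_diff by (rule prod.nat_diff_reindex[symmetric])
  also have "\<dots> = (\<Prod>i<s. ?q - (b - i))"
    by (rule prod.cong[OF refl]) (use sb bq in auto)
  finally have c_prod: "(?c choose s) * fact s = (\<Prod>i<s. ?q - (b - i))" .
  have b_prod: "(b choose s) * fact s = (\<Prod>i<s. b - i)"
    by (rule choose_mult_fact_eq_prod_diff)
  have "multiplicity p (\<Prod>i<s. ?q - (b - i)) = (\<Sum>i<s. multiplicity p (?q - (b - i)))"
    using sb bq by (intro prime_elem_multiplicity_prod_distrib[OF pe]) auto
  also have "\<dots> = (\<Sum>i<s. multiplicity p (b - i))"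
    using sb bq by (intro sum.cong refl multiplicity_prime_power_diff[OF p]) auto
  also have "\<dots> = multiplicity p (\<Prod>i<s. b - i)"
    using sb by (intro prime_elem_multiplicity_prod_distrib[OF pe, symmetric]) auto
  finally have "multiplicity p ((?c choose s) * fact s) = multiplicity p ((b choose s) * fact s)"
    unfolding c_prod b_prod .
  then have "multiplicity p (?c choose s) = multiplicity p (b choose s)"
    using sb bq by (simp add: prime_elem_multiplicity_mult_distrib[OF pe])
  also have "\<dots> = 0"
    using nd sb nu by (simp add: multiplicity_eq_zero_iff)
  finally show ?thesis
    using sb bq nu by (simp add: multiplicity_eq_zero_iff)
qed

lemma sum_subsets_card_le:
  fixes g :: "nat \<Rightarrow> 'a :: semiring_1"
  assumes X: "finite X"
  shows "(\<Sum>T | T \<subseteq> X \<and> card T \<le> s. g (card T)) = (\<Sum>k\<le>s. of_nat (card X choose k) * g k)"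
proof -
  let ?S = "{T. T \<subseteq> X \<and> card T \<le> s}"
  have "(\<Sum>T\<in>?S. g (card T)) = (\<Sum>k\<le>s. \<Sum>T\<in>{T \<in> ?S. card T = k}. g (card T))"
    using X by (intro sum.group[symmetric]) auto
  also have "\<dots> = (\<Sum>k\<le>s. \<Sum>T | T \<subseteq> X \<and> card T = k. g k)"
    by (intro sum.cong) auto
  also have "\<dots> = (\<Sum>k\<le>s. of_nat (card X choose k) * g k)"
    using X by (simp add: n_subsets)
  finally show ?thesis .
qed

lemma choose_card_add_eq_sum_subsets:
  assumes "finite X"
  shows "card X + c choose s = (\<Sum>T | T \<subseteq> X \<and> card T \<le> s. c choose (s - card T))"
  using sum_subsets_card_le[OF assms, where g = "\<lambda>k. c choose (s - k)" and s = s]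
    vandermonde[where m = "card X" and n = c and r = s]
  by simp

text \<open>The expansion of \<open>f(x) = (\<langle>x, 1\<^sub>X\<rangle> + c choose s)\<close> into the monomials
  \<open>x\<^sub>T = [T \<subseteq> B]\<close>, \<open>T \<subseteq> W\<close>, \<open>card T \<le> s\<close>, at the characteristic vector \<open>x\<close> of \<open>B\<close>.\<close>

lemma choose_card_inter_add_eq_sum_subsets:
  assumes W: "finite W" and XW: "X \<subseteq> W"
  shows "card (X \<inter> B) + c choose s =
    (\<Sum>T | T \<subseteq> W \<and> card T \<le> s.
      (if T \<subseteq> X then c choose (s - card T) else 0) * (if T \<subseteq> B then 1 else 0))"
proof -
  have "finite (X \<inter> B)"
    using W XW by (meson finite_Int finite_subset)
  then have "card (X \<inter> B) + c choose s = (\<Sum>T | T \<subseteq> X \<inter> B \<and> card T \<le> s. c choose (s - card T))"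
    by (rule choose_card_add_eq_sum_subsets)
  also have "\<dots> = (\<Sum>T | T \<subseteq> W \<and> card T \<le> s.
      (if T \<subseteq> X then c choose (s - card T) else 0) * (if T \<subseteq> B then 1 else 0))"
    using W XW by (intro sum.mono_neutral_cong_left) auto
  finally show ?thesis .
qed

lemma prime_elem_dvd_prod_iff:
  assumes "prime_elem p" and "finite A"
  shows "p dvd prod f A \<longleftrightarrow> (\<exists>x\<in>A. p dvd f x)"
  using assms(2)
  by induction (auto simp: prime_elem_dvd_mult_iff[OF assms(1)] prime_elem_not_unit[OF assms(1)])

lemma prime_elem_not_dvd_det:
  fixes P :: "'a :: comm_ring_1 mat"
  assumes P: "P \<in> carrier_mat n n" and p: "prime_elem p"
    and diag: "\<And>i. i < n \<Longrightarrow> \<not> p dvd P $$ (i, i)"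
    and off_diag: "\<And>i j. i < n \<Longrightarrow> j < n \<Longrightarrow> i \<noteq> j \<Longrightarrow> p dvd P $$ (i, j)"
  shows "\<not> p dvd det P"
proof
  define summand where "summand \<pi> = signof \<pi> * (\<Prod>i = 0..<n. P $$ (i, \<pi> i))" for \<pi>
  let ?S = "{\<pi>. \<pi> permutes {0..<n}}"
  have "det P = summand id + (\<Sum>\<pi> \<in> ?S - {id}. summand \<pi>)"
    unfolding det_def'[OF P] summand_def
    by (rule sum.remove) (simp_all add: finite_permutations)
  moreover have "p dvd (\<Sum>\<pi> \<in> ?S - {id}. summand \<pi>)"
  proof (rule dvd_sum)
    fix \<pi> assume "\<pi> \<in> ?S - {id}"
    then obtain i where \<pi>: "\<pi> permutes {0..<n}" "\<pi> i \<noteq> i"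
      by (metis DiffE eq_id_iff mem_Collect_eq singletonI)
    then have "i < n" "\<pi> i < n"
      using permutes_not_in permutes_in_image by fastforce+
    with \<pi> have "p dvd P $$ (i, \<pi> i)"
      using off_diag by simp
    also have "\<dots> dvd (\<Prod>i = 0..<n. P $$ (i, \<pi> i))"
      using \<open>i < n\<close> by (intro dvd_prodI) auto
    finally show "p dvd summand \<pi>"
      unfolding summand_def by (rule dvd_mult)
  qed
  moreover have "\<not> p dvd summand id"
    using diag unfolding summand_def by (simp add: prime_elem_dvd_prod_iff[OF p])
  moreover assume "p dvd det P"
  ultimately show False
    by (simp add: dvd_add_left_iff)
qed

lemma det_mult_eq_0_if_inner_dim_less:
  fixes U V :: "'a :: comm_ring_1 mat"
  assumes U: "U \<in> carrier_mat n m" and V: "V \<in> carrier_mat m n" and mn: "m < n"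
  shows "det (U * V) = 0"
proof -
  define U' where "U' = mat n n (\<lambda>(i, j). if j < m then U $$ (i, j) else 0)"
  define V' where "V' = mat n n (\<lambda>(i, j). if i < m then V $$ (i, j) else 0)"
  have U': "U' \<in> carrier_mat n n" and V': "V' \<in> carrier_mat n n"
    unfolding U'_def V'_def by auto
  have "U * V = U' * V'"
  proof (rule eq_matI)
    fix i j assume ij: "i < dim_row (U' * V')" "j < dim_col (U' * V')"
    have "(U' * V') $$ (i, j) = (\<Sum>k = 0..<n. U' $$ (i, k) * V' $$ (k, j))"
      using ij U' V' by (simp add: scalar_prod_def)
    also have "\<dots> = (\<Sum>k = 0..<m. U $$ (i, k) * V $$ (k, j))"
      using ij U' V' mn by (intro sum.mono_neutral_cong_right) (auto simp: U'_def V'_def)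
    also have "\<dots> = (U * V) $$ (i, j)"
      using ij U V U' V' by (simp add: scalar_prod_def)
    finally show "(U * V) $$ (i, j) = (U' * V') $$ (i, j)" ..
  qed (use U V U' V' in auto)
  moreover have "det U' = 0"
  proof -
    have "(\<Prod>i = 0..<n. U' $$ (i, \<pi> i)) = 0" if "\<pi> permutes {0..<n}" for \<pi>
    proof -
      have "n - 1 \<in> \<pi> ` {0..<n}"
        using permutes_image[OF that] mn by auto
      then obtain i where "i < n" "\<pi> i = n - 1"
        by auto
      then show ?thesis
        using mn by (intro prod_zero) (auto simp: U'_def intro!: bexI[of _ i])
    qed
    then show ?thesis
      unfolding det_def'[OF U'] by simp
  qed
  ultimately show ?thesis
    by (simp add: det_mult[OF U' V'])
qed

text \<open>The rank bound, over an arbitrary ring: if \<open>card F > card T\<close>, the matrix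
  \<open>(\<Sum>t\<in>T. u x t * v t y)\<^sub>x\<^sub>,\<^sub>y\<close> has determinant \<open>0\<close>, although it is diagonal modulo \<open>p\<close>.\<close>

lemma card_le_of_factorization_mod_prime_elem:
  fixes u :: "'a \<Rightarrow> 'b \<Rightarrow> 'r :: comm_ring_1" and v :: "'b \<Rightarrow> 'a \<Rightarrow> 'r"
  assumes F: "finite F" and T: "finite T" and p: "prime_elem p"
    and diag: "\<And>x. x \<in> F \<Longrightarrow> \<not> p dvd (\<Sum>t\<in>T. u x t * v t x)"
    and off_diag: "\<And>x y. x \<in> F \<Longrightarrow> y \<in> F \<Longrightarrow> x \<noteq> y \<Longrightarrow> p dvd (\<Sum>t\<in>T. u x t * v t y)"
  shows "card F \<le> card T"
proof (rule ccontr)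
  assume less: "\<not> card F \<le> card T"
  obtain f where f: "bij_betw f {0..<card F} F"
    using ex_bij_betw_nat_finite[OF F] by blast
  obtain g where g: "bij_betw g {0..<card T} T"
    using ex_bij_betw_nat_finite[OF T] by blast
  define U where "U = mat (card F) (card T) (\<lambda>(i, j). u (f i) (g j))"
  define V where "V = mat (card T) (card F) (\<lambda>(i, j). v (g i) (f j))"
  have UV: "(U * V) $$ (i, j) = (\<Sum>t\<in>T. u (f i) t * v t (f j))" if "i < card F" "j < card F" for i j
  proof -
    have "(U * V) $$ (i, j) = (\<Sum>k = 0..<card T. u (f i) (g k) * v (g k) (f j))"
      using that by (simp add: U_def V_def scalar_prod_def)
    also have "\<dots> = (\<Sum>t\<in>T. u (f i) t * v t (f j))"
      by (rule sum.reindex_bij_betw[OF g])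
    finally show ?thesis .
  qed
  have "det (U * V) = 0"
    unfolding U_def V_def
    by (rule det_mult_eq_0_if_inner_dim_less[OF mat_carrier mat_carrier]) (use less in simp)
  moreover have "\<not> p dvd det (U * V)"
  proof (rule prime_elem_not_dvd_det[OF _ p])
    show "U * V \<in> carrier_mat (card F) (card F)"
      unfolding U_def V_def by (rule mult_carrier_mat) auto
  next
    fix i assume "i < card F"
    then show "\<not> p dvd (U * V) $$ (i, i)"
      using UV diag bij_betw_apply[OF f] by simp
  next
    fix i j assume "i < card F" "j < card F" "i \<noteq> j"
    moreover have "f i \<noteq> f j"
      using calculation bij_betw_imp_inj_on[OF f] by (simp add: inj_on_eq_iff)
    ultimately show "p dvd (U * V) $$ (i, j)"
      using UV off_diag bij_betw_apply[OF f] by simp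
  qed
  ultimately show False
    by simp
qed

lemma mod_in_atLeastAtMost_iff:
  assumes "b < m"
  shows "mod_in m {a..b} t \<longleftrightarrow> t mod m \<in> {a..b}"
  using assms unfolding mod_in_def by (auto intro: bexI[of _ "t mod m"])

lemma add_mod_less_if_mod_in_window:
  fixes q :: nat
  assumes t: "t mod q \<in> {b - s + 1..b}" and sb: "s \<le> b" and b: "b < q"
  shows "(t + (q + s - 1 - b)) mod q < s"
proof -
  let ?l = "t mod q"
  have "(t + (q + s - 1 - b)) mod q = (?l + (q + s - 1 - b)) mod q"
    by (simp add: mod_add_left_eq)
  also have "?l + (q + s - 1 - b) = q + (?l + s - 1 - b)"
    using t b by auto
  also have "(q + (?l + s - 1 - b)) mod q = ?l + s - 1 - b"
    using t sb b by (intro trans[OF mod_add_self1 mod_less]) auto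
  finally show ?thesis
    using t by auto
qed

lemma diff_mod_less_if_mod_in_window:
  fixes q :: nat
  assumes t: "t mod q \<in> {b - s + 1..b}" and b: "b < q" and tK: "t \<le> q * K"
  shows "(q * K + b - t) mod q < s"
proof -
  let ?l = "t mod q" and ?a = "t div q"
  have t_eq: "t = q * ?a + ?l"
    by simp
  have l: "1 \<le> ?l" "?l \<le> b"
    using t by auto
  then have "q * ?a < q * K"
    using tK t_eq by linarith
  then have "?a \<le> K"
    by simp
  then have "q * K = q * (K - ?a) + q * ?a"
    by (simp add: diff_mult_distrib2)
  then have "q * K + b - t = q * (K - ?a) + (b - ?l)"
    using l t_eq by arith
  moreover have "b - ?l < s" "b - ?l < q"
    using t b by auto
  ultimately show ?thesis
    by simp
qed

locale modular_differencing =
  fixes p k s b n :: nat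
  assumes prime_p: "prime p"
    and s_le_b: "s \<le> b" and b_less: "b < p ^ k"
    and not_dvd_choose: "\<not> p dvd (b choose s)"
begin

text \<open>In the notation of the proof idea, \<open>support A\<close> and \<open>offset A\<close> are \<open>X\<close> and \<open>c\<close>,
  \<open>poly_value A B = f\<^sub>A(1\<^sub>B)\<close>, and \<open>monomial_coeff A T\<close> is the coefficient of \<open>x\<^sub>T\<close> in \<open>f\<^sub>A\<close>.\<close>

definition support :: "nat set \<Rightarrow> nat set" where
  "support A = (if n \<in> A then {1..n} - A else A)"

definition offset :: "nat set \<Rightarrow> nat" where
  "offset A = (if n \<in> A then p ^ k + s - 1 - b else p ^ k * card A + b - card A)"

definition poly_value :: "nat set \<Rightarrow> nat set \<Rightarrow> nat" where
  "poly_value A B = card (support A \<inter> B) + offset A choose s"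

definition monomial_coeff :: "nat set \<Rightarrow> nat set \<Rightarrow> nat" where
  "monomial_coeff A T = (if T \<subseteq> support A then offset A choose (s - card T) else 0)"

lemma support_subset: "A \<subseteq> {1..n} \<Longrightarrow> support A \<subseteq> {1..<n}"
  unfolding support_def by (auto simp: subset_iff order.strict_iff_order)

lemma poly_value_eq_sum_monomials:
  assumes "A \<subseteq> {1..n}"
  shows "poly_value A B =
    (\<Sum>T | T \<subseteq> {1..<n} \<and> card T \<le> s. monomial_coeff A T * (if T \<subseteq> B then 1 else 0))"
  unfolding poly_value_def monomial_coeff_def
  by (rule choose_card_inter_add_eq_sum_subsets[OF _ support_subset[OF assms]]) simp

lemma poly_value_self_not_dvd:
  assumes A: "A \<subseteq> {1..n}"
  shows "\<not> p dvd poly_value A A"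
proof (cases "n \<in> A")
  case True
  then have "support A \<inter> A = {}"
    by (auto simp: support_def)
  with True have "poly_value A A = p ^ k + s - 1 - b choose s"
    by (simp add: poly_value_def offset_def)
  then show ?thesis
    using prime_not_dvd_choose_reflect[OF prime_p s_le_b b_less not_dvd_choose] by simp
next
  case False
  have "card A \<le> p ^ k * card A"
    using b_less by simp
  moreover have "offset A = p ^ k * card A + b - card A"
    using False by (simp add: offset_def)
  ultimately have "card A + offset A = p ^ k * card A + b"
    by linarith
  with False have "poly_value A A = p ^ k * card A + b choose s"
    by (simp add: poly_value_def support_def)
  then have "poly_value A A mod p = (b choose s) mod p"
    using choose_prime_power_mult_add_mod[OF prime_p] s_le_b b_less by simp
  then show ?thesis
    using not_dvd_choose by (simp add: dvd_eq_mod_eq_0)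
qed

lemma poly_value_dvd:
  assumes A: "A \<subseteq> {1..n}" and B: "B \<subseteq> {1..n}"
    and AB: "card (A - B) mod p ^ k \<in> {b - s + 1..b}"
    and BA: "card (B - A) mod p ^ k \<in> {b - s + 1..b}"
  shows "p dvd poly_value A B"
proof (cases "n \<in> A")
  case True
  then have "support A \<inter> B = B - A"
    using B by (auto simp: support_def)
  with True have "poly_value A B = card (B - A) + (p ^ k + s - 1 - b) choose s"
    by (simp add: poly_value_def offset_def)
  moreover have "p dvd (card (B - A) + (p ^ k + s - 1 - b) choose s)"
    using s_le_b b_less
    by (intro prime_dvd_choose_if_mod_less[OF prime_p, where k = k] add_mod_less_if_mod_in_window[OF BA]) auto
  ultimately show ?thesis
    by simp
next
  case False
  have fin: "finite A"
    using A finite_subset by blast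
  have "card (A \<inter> B) + card (A - B) = card A"
    using fin by (metis Int_Diff_Un Int_Diff_disjoint card_Un_disjoint finite_Diff finite_Int)
  moreover have "card A \<le> p ^ k * card A"
    using b_less by simp
  moreover have "offset A = p ^ k * card A + b - card A"
    using False by (simp add: offset_def)
  ultimately have "card (A \<inter> B) + offset A = p ^ k * card A + b - card (A - B)"
    by linarith
  with False have "poly_value A B = p ^ k * card A + b - card (A - B) choose s"
    by (simp add: poly_value_def support_def)
  moreover have "card (A - B) \<le> p ^ k * card A"
    using fin \<open>card A \<le> p ^ k * card A\<close> by (meson Diff_subset card_mono order.trans)
  then have "p dvd (p ^ k * card A + b - card (A - B) choose s)"
    using s_le_b b_less
    by (intro prime_dvd_choose_if_mod_less[OF prime_p, where k = k] diff_mod_less_if_mod_in_window[OF AB]) auto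
  ultimately show ?thesis
    by simp
qed

theorem card_le_sum_choose:
  assumes "modular_L_differencing_Sperner (p ^ k) {b - s + 1..b} n F"
  shows "card F \<le> (\<Sum>i=0..s. (n - 1) choose i)"
proof -
  have F: "F \<subseteq> Pow {1..n}"
    and window: "\<And>A B. A \<in> F \<Longrightarrow> B \<in> F \<Longrightarrow> A \<noteq> B \<Longrightarrow> card (A - B) mod p ^ k \<in> {b - s + 1..b}"
    using assms mod_in_atLeastAtMost_iff[OF b_less]
    unfolding modular_L_differencing_Sperner_def by auto
  let ?T = "{T. T \<subseteq> {1..<n} \<and> card T \<le> s}"
  let ?u = "\<lambda>A T. int (monomial_coeff A T)" and ?v = "\<lambda>T B. int (if T \<subseteq> B then 1 else 0)"
  have poly_value_int: "int (poly_value A B) = (\<Sum>T\<in>?T. ?u A T * ?v T B)" if "A \<in> F" for A B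
  proof -
    have "A \<subseteq> {1..n}"
      using that F by auto
    then show ?thesis
      by (simp add: poly_value_eq_sum_monomials)
  qed
  have "card F \<le> card ?T"
  proof (rule card_le_of_factorization_mod_prime_elem[of F ?T "int p" ?u ?v])
    show "finite F"
      using F by (meson finite_Pow_iff finite_atLeastAtMost finite_subset)
    show "prime_elem (int p)"
      using prime_p by simp
    show "\<not> int p dvd (\<Sum>T\<in>?T. ?u A T * ?v T A)" if "A \<in> F" for A
      unfolding poly_value_int[OF that, symmetric] int_dvd_int_iff
      using that F poly_value_self_not_dvd by auto
    show "int p dvd (\<Sum>T\<in>?T. ?u A T * ?v T B)" if "A \<in> F" "B \<in> F" "A \<noteq> B" for A B
      unfolding poly_value_int[OF that(1), symmetric] int_dvd_int_iff
      using that F by (intro poly_value_dvd window) auto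
  qed simp
  also have "card ?T = (\<Sum>i=0..s. (n - 1) choose i)"
    using sum_subsets_card_le[of "{1..<n}" "\<lambda>_. 1 :: nat" s] by (simp add: atMost_atLeast0)
  finally show ?thesis .
qed

end

theorem mainTheorem1:
  fixes p q s b n :: nat and F :: "nat set set"
  assumes "prime p"
    and "\<exists>k. q = p ^ k"
    and "1 \<le> s" and "s \<le> b" and "b < q"
    and "\<not> p dvd (b choose s)"
    and "modular_L_differencing_Sperner q {b - s + 1..b} n F"
  shows "card F \<le> (\<Sum>i=0..s. (n - 1) choose i)"
proof -
  obtain k where q: "q = p ^ k"
    using assms(2) by blast
  interpret modular_differencing p k s b n
    using assms(1,4-6) q by unfold_locales simp_all
  show ?thesis
    using card_le_sum_choose assms(7) q by simp
qed

end
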